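(* Let $T\subset V$ be an open cone with basepoint $b\in T$, let $x\in\partial T\setminus[0]_T$, and let $h\in\mathcal K_{\tau(T,x)}\cup\mathcal B_{\tau(T,x)}$. Then there is a sequence of points in $T$ that is an almost-geodesic with respect to both $F_T$ and $RF_T$, and that converges to $h|_T$ in the Funk sense (for $F_T$) and to $r_{T,x}$ in the reverse Funk sense (for $RF_T$).
   Context: $V$ is a finite-dimensional real vector space. An open cone is a nonempty open convex set $T\subset V$ with $\lambda T\subseteq T$ for all $\lambda>0$ and $0\notin T$; $\partial T$ its boundary. Write $x\le_T y$ iff $y-x\in\overline T$, $[0]_T:=\overline T\cap(-\overline T)$. $M_T(y/x):=\inf\{\lambda>0:y\le_T\lambda x\}$, $F_T(y,x):=\log M_T(y/x)$, $RF_T(x,y):=F_T(y,x)$. Open tangent cone $\tau(T,x):=\{\lambda(y-x):\lambda>0,\ y\in T\}$ (an open cone containing $T$). For an open cone $S\ni b$: $f_{S,p}(y):=F_S(y,p)-F_S(b,p)$ ($p\in S$), $\mathcal K_S:=\{f_{S,p}:p\in S\}$; a sequence $(x_n)$ in $S$ converges in the Funk sense to $g$ if $F_S(\cdot,x_n)-F_S(b,x_n)\to g$ pointwise on $S$; an almost-geodesic for $d\in\{F_S,RF_S\}$ is a sequence $(x_l)$ in $S$ with, for some $\epsilon>0$, $\sum_{i=1}^l d(x_{i-1},x_i)\le d(x_0,x_l)+\epsilon$ for all $l\ge1$; $\mathcal B_S$ is the set of Funk-sense limits of $F_S$-almost-geodesics that are not in $\mathcal K_S$. For $p\in\partial T\setminus[0]_T$,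 $r_{T,p}(y):=RF_T(y,p)-RF_T(b,p)$; convergence in the reverse Funk sense means $RF_T(\cdot,x_n)-RF_T(b,x_n)\to g$ pointwise on $T$. *)

theory Defs
  imports "HOL-Analysis.Analysis"
begin

text \<open>V is modelled as a euclidean_space type (finite-dimensional real vector space).\<close>

definition open_cone :: "'a::euclidean_space set \<Rightarrow> bool" where
  "open_cone T \<longleftrightarrow> T \<noteq> {} \<and> open T \<and> convex T \<and>
     (\<forall>c>0. (\<lambda>v. c *\<^sub>R v) ` T \<subseteq> T) \<and> 0 \<notin> T"

definition cone_le :: "'a::euclidean_space set \<Rightarrow> 'a \<Rightarrow> 'a \<Rightarrow> bool" where
  "cone_le T x y \<longleftrightarrow> y - x \<in> closure T"

definition zero_set :: "'a::euclidean_space set \<Rightarrow> 'a set" where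
  "zero_set T = closure T \<inter> uminus ` closure T"

definition funkM :: "'a::euclidean_space set \<Rightarrow> 'a \<Rightarrow> 'a \<Rightarrow> real" where
  "funkM T y x = Inf {c. c > 0 \<and> cone_le T y (c *\<^sub>R x)}"

definition funk :: "'a::euclidean_space set \<Rightarrow> 'a \<Rightarrow> 'a \<Rightarrow> real" where
  "funk T y x = ln (funkM T y x)"

definition rfunk :: "'a::euclidean_space set \<Rightarrow> 'a \<Rightarrow> 'a \<Rightarrow> real" where
  "rfunk T x y = funk T y x"

definition tangent_cone :: "'a::euclidean_space set \<Rightarrow> 'a \<Rightarrow> 'a set" where
  "tangent_cone T x = {c *\<^sub>R (y - x) | c y. c > 0 \<and> y \<in> T}"

definition almost_geodesic :: "'a set \<Rightarrow> ('a \<Rightarrow> 'a \<Rightarrow> real) \<Rightarrow> (nat \<Rightarrow> 'a) \<Rightarrow> bool" where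
  "almost_geodesic S d xs \<longleftrightarrow> (\<forall>n. xs n \<in> S) \<and>
     (\<exists>\<epsilon>>0. \<forall>l\<ge>1. (\<Sum>i=1..l. d (xs (i - 1)) (xs i)) \<le> d (xs 0) (xs l) + \<epsilon>)"

definition funk_converges :: "'a::euclidean_space set \<Rightarrow> 'a \<Rightarrow> (nat \<Rightarrow> 'a) \<Rightarrow> ('a \<Rightarrow> real) \<Rightarrow> bool" where
  "funk_converges S b xs g \<longleftrightarrow> (\<forall>n. xs n \<in> S) \<and>
     (\<forall>y\<in>S. (\<lambda>n. funk S y (xs n) - funk S b (xs n)) \<longlonglongrightarrow> g y)"

definition rfunk_converges :: "'a::euclidean_space set \<Rightarrow> 'a \<Rightarrow> (nat \<Rightarrow> 'a) \<Rightarrow> ('a \<Rightarrow> real) \<Rightarrow> bool" where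
  "rfunk_converges T b xs g \<longleftrightarrow> (\<forall>n. xs n \<in> T) \<and>
     (\<forall>y\<in>T. (\<lambda>n. rfunk T y (xs n) - rfunk T b (xs n)) \<longlonglongrightarrow> g y)"

definition funk_f :: "'a::euclidean_space set \<Rightarrow> 'a \<Rightarrow> 'a \<Rightarrow> 'a \<Rightarrow> real" where
  "funk_f S b p y = funk S y p - funk S b p"

text \<open>Membership in K_S and B_S; functions on S are identified when they agree on S.\<close>
definition in_K :: "'a::euclidean_space set \<Rightarrow> 'a \<Rightarrow> ('a \<Rightarrow> real) \<Rightarrow> bool" where
  "in_K S b g \<longleftrightarrow> (\<exists>p\<in>S. \<forall>y\<in>S. g y = funk_f S b p y)"

definition in_B :: "'a::euclidean_space set \<Rightarrow> 'a \<Rightarrow> ('a \<Rightarrow> real) \<Rightarrow> bool" where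
  "in_B S b g \<longleftrightarrow> (\<exists>xs. almost_geodesic S (funk S) xs \<and> funk_converges S b xs g) \<and> \<not> in_K S b g"

definition rfunk_r :: "'a::euclidean_space set \<Rightarrow> 'a \<Rightarrow> 'a \<Rightarrow> 'a \<Rightarrow> real" where
  "rfunk_r T b p y = rfunk T y p - rfunk T b p"

end

theory Submission
  imports Defs
begin

(* The tangent cone tau = tau(T,x) contains T, and the closure of tau contains the whole line
   through x.  Consequently, for z in tau and small s > 0 the Funk gauges of T at x + s z and of
   tau at z agree up to the scale s:  M_tau(y/z) <= s M_T(y/(x + s z)) always, and for each fixed
   y in T the reverse inequality holds up to a factor close to 1 once s is small; moreover
   M_tau((x + s w)/z) = s M_tau(w/z).  Take an F_tau-almost-geodesic z_n with Funk limit h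
   (the constant sequence p if h = f_{tau,p}) and choose scales s_n inductively so that these
   estimates hold with error 2^-n on a growing finite subset of T with dense union.  The points
   x_n = x + s_n z_n then satisfy F_T(y,x_n) = F_tau(y,z_n) - log s_n + o(1), which transfers the
   almost-geodesic property and the Funk limit h (first on the dense set, then everywhere by
   local uniform continuity of F_T(-,u)).  Since x_n -> x, also M_T(x_n/y) -> M_T(x/y), giving
   the reverse Funk limit r_{T,x}, and M_T(x/x_n) -> 1 makes the reverse Funk steps summable. *)

section \<open>Open cones\<close>

lemma open_cone_scaleR: "open_cone S \<Longrightarrow> y \<in> S \<Longrightarrow> c > 0 \<Longrightarrow> c *\<^sub>R y \<in> S"
  unfolding open_cone_def by blast

lemma open_cone_ball:
  assumes "open_cone S" "u \<in> S"
  obtains r where "r > 0" "ball u r \<subseteq> S"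
proof -
  have "open S"
    using assms(1) by (simp add: open_cone_def)
  then show ?thesis
    using assms(2) that open_contains_ball by blast
qed

lemma open_cone_add:
  assumes "open_cone S" "y \<in> S" "z \<in> S"
  shows "y + z \<in> S"
proof -
  have "(1/2) *\<^sub>R y + (1/2) *\<^sub>R z \<in> S"
    using assms by (intro convexD) (auto simp: open_cone_def)
  from open_cone_scaleR[OF assms(1) this, of 2] show ?thesis
    by (simp add: scaleR_add_right)
qed

lemma zero_in_closure_open_cone:
  assumes "open_cone S"
  shows "0 \<in> closure S"
proof -
  obtain t where t: "t \<in> S"
    using assms unfolding open_cone_def by blast
  have "((\<lambda>c. c *\<^sub>R t) \<longlongrightarrow> 0 *\<^sub>R t) (at_right 0)"
    by (intro tendsto_intros)
  moreover have "eventually (\<lambda>c. c *\<^sub>R t \<in> closure S) (at_right (0::real))"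
    using eventually_at_right_less[of 0]
    by eventually_elim (use open_cone_scaleR[OF assms t] closure_subset in blast)
  ultimately show ?thesis
    by (intro Lim_in_closed_set[of _ "\<lambda>c. c *\<^sub>R t"]) auto
qed

lemma closure_open_cone_scaleR:
  assumes "open_cone S" "y \<in> closure S" "c \<ge> 0"
  shows "c *\<^sub>R y \<in> closure S"
proof (cases "c = 0")
  case True
  then show ?thesis using zero_in_closure_open_cone[OF assms(1)] by simp
next
  case False
  have "c *\<^sub>R y \<in> closure ((*\<^sub>R) c ` S)"
    using assms(2) closure_scaleR[of c S] by blast
  also have "\<dots> \<subseteq> closure S"
    using assms(1,3) False unfolding open_cone_def by (intro closure_mono) auto
  finally show ?thesis .
qed

lemma closure_open_cone_add:
  assumes "open_cone S" "y \<in> closure S" "z \<in> closure S"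
  shows "y + z \<in> closure S"
proof -
  have "(1/2) *\<^sub>R y + (1/2) *\<^sub>R z \<in> closure S"
    using assms by (intro convexD convex_closure) (auto simp: open_cone_def)
  from closure_open_cone_scaleR[OF assms(1) this, of 2] show ?thesis
    by (simp add: scaleR_add_right)
qed

lemma open_cone_add_closure:
  assumes "open_cone S" "y \<in> S" "z \<in> closure S"
  shows "y + z \<in> S"
proof -
  obtain r where r: "r > 0" "ball y r \<subseteq> S"
    using open_cone_ball[OF assms(1,2)] .
  obtain z' where z': "z' \<in> S" "dist z' z < r"
    using assms(3) r(1) unfolding closure_approachable by blast
  have "y + (z - z') \<in> S"
    using r z'(2) by (auto simp: dist_norm norm_minus_commute)
  from open_cone_add[OF assms(1) this z'(1)] show ?thesis by simp
qed

lemma uminus_notin_closure_open_cone: "open_cone S \<Longrightarrow> y \<in> S \<Longrightarrow> - y \<notin> closure S"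
  using open_cone_add_closure[of S y "- y"] by (auto simp: open_cone_def)

lemma open_dense_range:
  fixes S :: "'a::euclidean_space set"
  assumes "open S" "S \<noteq> {}"
  obtains d :: "nat \<Rightarrow> 'a" where "range d \<subseteq> S" "S \<subseteq> closure (range d)"
proof -
  obtain D :: "'a set" where D: "countable D" "\<And>X. open X \<Longrightarrow> X \<noteq> {} \<Longrightarrow> \<exists>d\<in>D. d \<in> X"
    by (rule countable_dense_setE) blast
  have dense: "\<exists>d\<in>D \<inter> S. dist d y < e" if "y \<in> S" "e > 0" for y e
  proof -
    have "open (ball y e \<inter> S)" "y \<in> ball y e \<inter> S"
      using assms(1) that by auto
    then obtain d where "d \<in> D" "d \<in> ball y e \<inter> S"
      using D(2) by blast
    then show ?thesis
      by (auto simp: dist_commute)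
  qed
  obtain y0 where "y0 \<in> S"
    using assms(2) by blast
  then have "D \<inter> S \<noteq> {}"
    using dense[OF _ zero_less_one] by blast
  then have range: "range (from_nat_into (D \<inter> S)) = D \<inter> S"
    using D(1) by simp
  show ?thesis
  proof (rule that[of "from_nat_into (D \<inter> S)"])
    show "range (from_nat_into (D \<inter> S)) \<subseteq> S"
      unfolding range by blast
    show "S \<subseteq> closure (range (from_nat_into (D \<inter> S)))"
      unfolding range subset_iff closure_approachable using dense by blast
  qed
qed

section \<open>The Funk gauge\<close>

definition dominating_scalars :: "'a::euclidean_space set \<Rightarrow> 'a \<Rightarrow> 'a \<Rightarrow> real set" where
  "dominating_scalars S y u = {c. c > 0 \<and> c *\<^sub>R u - y \<in> closure S}"

lemma funkM_eq_Inf: "funkM S y u = Inf (dominating_scalars S y u)"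
  unfolding funkM_def dominating_scalars_def cone_le_def by simp

lemma dominating_scalars_ball:
  assumes S: "open_cone S" and r: "r > 0" "ball u r \<subseteq> S" and c: "c > norm y / r"
  shows "c \<in> dominating_scalars S y u"
proof -
  have c0: "c > 0"
    using c r by (smt (verit) divide_nonneg_pos norm_ge_zero)
  have "norm ((1/c) *\<^sub>R y) < r"
    using c c0 r by (simp add: field_simps)
  then have "u - (1/c) *\<^sub>R y \<in> S"
    using r by (auto simp: dist_norm)
  from open_cone_scaleR[OF S this c0] have "c *\<^sub>R u - y \<in> S"
    using c0 by (simp add: scaleR_diff_right)
  then show ?thesis
    using c0 closure_subset unfolding dominating_scalars_def by auto
qed

lemma dominating_scalars_nonempty: "open_cone S \<Longrightarrow> u \<in> S \<Longrightarrow> dominating_scalars S y u \<noteq> {}"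
  by (metis open_cone_ball dominating_scalars_ball empty_iff gt_ex)

lemma bdd_below_dominating_scalars: "bdd_below (dominating_scalars S y u)"
  unfolding dominating_scalars_def by (intro bdd_belowI[of _ 0]) auto

lemma dominating_scalars_upward:
  assumes S: "open_cone S" "u \<in> S" and c: "c \<in> dominating_scalars S y u" "c \<le> c'"
  shows "c' \<in> dominating_scalars S y u"
proof (cases "c' = c")
  case False
  then have "(c' - c) *\<^sub>R u \<in> S"
    using S c by (intro open_cone_scaleR) auto
  from open_cone_add_closure[OF S(1) this, of "c *\<^sub>R u - y"] c False show ?thesis
    using closure_subset unfolding dominating_scalars_def by (auto simp: algebra_simps)
qed (use c in auto)

lemma funkM_le: "c \<in> dominating_scalars S y u \<Longrightarrow> funkM S y u \<le> c"
  unfolding funkM_eq_Inf by (rule cInf_lower[OF _ bdd_below_dominating_scalars])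

lemma funkM_geI:
  assumes "open_cone S" "u \<in> S" "\<And>c. c \<in> dominating_scalars S y u \<Longrightarrow> a \<le> c"
  shows "a \<le> funkM S y u"
  unfolding funkM_eq_Inf using dominating_scalars_nonempty[OF assms(1,2)] assms(3)
  by (rule cInf_greatest)

lemma funkM_nonneg: "open_cone S \<Longrightarrow> u \<in> S \<Longrightarrow> 0 \<le> funkM S y u"
  by (rule funkM_geI) (auto simp: dominating_scalars_def)

lemma dominating_scalars_if_funkM_less:
  assumes "open_cone S" "u \<in> S" "funkM S y u < c"
  shows "c \<in> dominating_scalars S y u"
proof -
  obtain c' where "c' \<in> dominating_scalars S y u" "c' < c"
    using assms(3) cInf_less_iff[OF dominating_scalars_nonempty[OF assms(1,2)] bdd_below_dominating_scalars]
    unfolding funkM_eq_Inf by blast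
  then show ?thesis
    using dominating_scalars_upward[OF assms(1,2)] by auto
qed

lemma funkM_leI:
  assumes "open_cone S" "u \<in> S" "\<And>c. c > a \<Longrightarrow> c \<in> dominating_scalars S y u"
  shows "funkM S y u \<le> a"
proof (rule ccontr)
  assume "\<not> ?thesis"
  then have "(funkM S y u + a) / 2 \<in> dominating_scalars S y u"
    by (intro assms(3)) auto
  from funkM_le[OF this] \<open>\<not> ?thesis\<close> show False by auto
qed

lemma funkM_le_scaled:
  assumes "open_cone S" "u \<in> S" "open_cone S'" "u' \<in> S'" "a > 0"
    and "\<And>c. c \<in> dominating_scalars S y u \<Longrightarrow> a * c \<in> dominating_scalars S' y' u'"
  shows "funkM S' y' u' \<le> a * funkM S y u"
proof (rule funkM_leI[OF assms(3,4)])
  fix c assume "c > a * funkM S y u"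
  then have "c / a \<in> dominating_scalars S y u"
    using assms(5) by (intro dominating_scalars_if_funkM_less[OF assms(1,2)]) (simp add: field_simps)
  from assms(6)[OF this] show "c \<in> dominating_scalars S' y' u'"
    using assms(5) by simp
qed

lemma funkM_mono:
  assumes S: "open_cone S" "u \<in> S" and a: "a > 0" and le: "a *\<^sub>R d - y \<in> closure S"
  shows "funkM S y u \<le> a * funkM S d u"
proof (rule funkM_le_scaled[OF S S a])
  fix c assume c: "c \<in> dominating_scalars S d u"
  have "a *\<^sub>R (c *\<^sub>R u - d) + (a *\<^sub>R d - y) \<in> closure S"
    using c a le by (intro closure_open_cone_add closure_open_cone_scaleR S)
      (auto simp: dominating_scalars_def)
  moreover have "a *\<^sub>R (c *\<^sub>R u - d) + (a *\<^sub>R d - y) = (a * c) *\<^sub>R u - y"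
    by (simp add: algebra_simps)
  ultimately show "a * c \<in> dominating_scalars S y u"
    using a c by (simp add: dominating_scalars_def)
qed

lemma funkM_pos:
  assumes S: "open_cone S" "u \<in> S" and y: "- y \<notin> closure S"
  shows "funkM S y u > 0"
proof -
  obtain r where r: "r > 0" "ball (-y) r \<subseteq> - closure S"
    using open_contains_ball[of "- closure S"] y by blast
  have u: "norm u > 0"
    using S by (auto simp: open_cone_def)
  have "r / norm u \<le> funkM S y u"
  proof (rule funkM_geI[OF S])
    fix c assume c: "c \<in> dominating_scalars S y u"
    then have "c *\<^sub>R u - y \<notin> ball (-y) r"
      using r unfolding dominating_scalars_def by auto
    then have "r \<le> c * norm u"
      using c by (simp add: dist_norm dominating_scalars_def)
    then show "r / norm u \<le> c"
      using u by (simp add: divide_le_eq)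
  qed
  moreover have "r / norm u > 0"
    using r u by simp
  ultimately show ?thesis by linarith
qed

lemma funkM_pos_in: "open_cone S \<Longrightarrow> u \<in> S \<Longrightarrow> y \<in> S \<Longrightarrow> funkM S y u > 0"
  by (rule funkM_pos) (auto dest: uminus_notin_closure_open_cone)

lemma funkM_le_norm:
  assumes S: "open_cone S" "u \<in> S" and r: "r > 0" "ball u r \<subseteq> S"
  shows "funkM S y u \<le> norm y / r"
  by (rule funkM_leI[OF S]) (rule dominating_scalars_ball[OF S(1) r])

lemma funkM_subadditive:
  assumes S: "open_cone S" "u \<in> S"
  shows "funkM S (y + v) u \<le> funkM S y u + funkM S v u"
proof (rule funkM_leI[OF S])
  fix c assume c: "c > funkM S y u + funkM S v u"
  define e where "e = (c - funkM S y u - funkM S v u) / 2"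
  have e: "e > 0"
    using c by (simp add: e_def)
  have "funkM S y u + e \<in> dominating_scalars S y u" "funkM S v u + e \<in> dominating_scalars S v u"
    using e by (auto intro: dominating_scalars_if_funkM_less[OF S])
  then have "((funkM S y u + e) *\<^sub>R u - y) + ((funkM S v u + e) *\<^sub>R u - v) \<in> closure S"
    unfolding dominating_scalars_def by (intro closure_open_cone_add[OF S(1)]) auto
  moreover have "((funkM S y u + e) *\<^sub>R u - y) + ((funkM S v u + e) *\<^sub>R u - v) = c *\<^sub>R u - (y + v)"
    by (simp add: e_def algebra_simps flip: scaleR_add_left)
  moreover have "c > 0"
    using funkM_nonneg[OF S, of y] funkM_nonneg[OF S, of v] c by linarith
  ultimately show "c \<in> dominating_scalars S (y + v) u"
    unfolding dominating_scalars_def by auto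
qed

lemma isCont_funkM:
  assumes S: "open_cone S" "u \<in> S"
  shows "isCont (\<lambda>y. funkM S y u) y0"
proof -
  obtain r where r: "r > 0" "ball u r \<subseteq> S"
    using open_cone_ball[OF S] .
  have "dist (funkM S y u) (funkM S y' u) \<le> (1 / r) * dist y y'" for y y'
  proof -
    have "funkM S y u \<le> funkM S y' u + funkM S (y - y') u"
      using funkM_subadditive[OF S, of y' "y - y'"] by simp
    moreover have "funkM S y' u \<le> funkM S y u + funkM S (y' - y) u"
      using funkM_subadditive[OF S, of y "y' - y"] by simp
    moreover have "funkM S (y - y') u \<le> dist y y' / r" "funkM S (y' - y) u \<le> dist y y' / r"
      using funkM_le_norm[OF S r, of "y - y'"] funkM_le_norm[OF S r, of "y' - y"]
      by (simp_all add: dist_norm norm_minus_commute)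
    ultimately show ?thesis
      by (simp add: dist_real_def)
  qed
  then have "(1 / r)-lipschitz_on UNIV (\<lambda>y. funkM S y u)"
    using r by (intro lipschitz_onI) auto
  then show ?thesis
    using lipschitz_on_continuous_on continuous_on_eq_continuous_at open_UNIV by blast
qed

lemma funkM_self:
  assumes S: "open_cone S" and y: "y \<in> S"
  shows "funkM S y y = 1"
proof (rule antisym)
  show "funkM S y y \<le> 1"
  proof (rule funkM_leI[OF S y])
    fix c :: real assume "c > 1"
    then have "(c - 1) *\<^sub>R y \<in> S"
      by (intro open_cone_scaleR[OF S y]) auto
    then show "c \<in> dominating_scalars S y y"
      using \<open>c > 1\<close> closure_subset unfolding dominating_scalars_def by (auto simp: algebra_simps)
  qed
  show "1 \<le> funkM S y y"
  proof (rule funkM_geI[OF S y], rule ccontr)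
    fix c assume c: "c \<in> dominating_scalars S y y" and "\<not> 1 \<le> c"
    then have "(1 / (1 - c)) *\<^sub>R (c *\<^sub>R y - y) \<in> closure S"
      unfolding dominating_scalars_def by (intro closure_open_cone_scaleR[OF S]) auto
    moreover have "c *\<^sub>R y - y = (c - 1) *\<^sub>R y" "(c - 1) / (1 - c) = -1"
      using \<open>\<not> 1 \<le> c\<close> by (simp_all add: scaleR_diff_left field_simps)
    ultimately show False
      using uminus_notin_closure_open_cone[OF S y] by simp
  qed
qed

lemma funk_self: "open_cone S \<Longrightarrow> y \<in> S \<Longrightarrow> funk S y y = 0"
  by (simp add: funk_def funkM_self)

lemma funk_le_if_dominated:
  assumes S: "open_cone S" "u \<in> S" and w: "w \<in> S" "w' \<in> S"
    and le: "exp dl *\<^sub>R w' - w \<in> closure S"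
  shows "funk S w u \<le> dl + funk S w' u"
proof -
  have "funkM S w u \<le> exp dl * funkM S w' u"
    by (rule funkM_mono[OF S _ le]) simp
  then have "ln (funkM S w u) \<le> ln (exp dl * funkM S w' u)"
    using funkM_pos_in[OF S w(1)] funkM_pos_in[OF S w(2)] by simp
  then show ?thesis
    unfolding funk_def using funkM_pos_in[OF S w(2)] by (simp add: ln_mult)
qed

lemma eventually_funk_near:
  assumes S: "open_cone S" and y: "y \<in> S" and dl: "dl > 0"
  shows "eventually (\<lambda>w. w \<in> S \<and> (\<forall>u\<in>S. \<bar>funk S w u - funk S y u\<bar> \<le> dl)) (nhds y)"
proof -
  have "open S"
    using S by (simp add: open_cone_def)
  have id: "((\<lambda>w. w) \<longlongrightarrow> y) (nhds y)"
    by (rule filterlim_ident)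
  have "(exp dl - 1) *\<^sub>R y \<in> S"
    using dl by (intro open_cone_scaleR[OF S y]) auto
  then have "exp dl *\<^sub>R y - y \<in> S"
    by (simp add: algebra_simps)
  moreover have "((\<lambda>w. exp dl *\<^sub>R w - y) \<longlongrightarrow> exp dl *\<^sub>R y - y) (nhds y)"
    "((\<lambda>w. exp dl *\<^sub>R y - w) \<longlongrightarrow> exp dl *\<^sub>R y - y) (nhds y)"
    by (intro tendsto_intros id)+
  ultimately have "eventually (\<lambda>w. exp dl *\<^sub>R w - y \<in> S) (nhds y)"
    "eventually (\<lambda>w. exp dl *\<^sub>R y - w \<in> S) (nhds y)"
    using \<open>open S\<close> by (auto intro: topological_tendstoD)
  moreover have "eventually (\<lambda>w. w \<in> S) (nhds y)"
    using topological_tendstoD[OF id \<open>open S\<close> y] .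
  ultimately show ?thesis
  proof eventually_elim
    case (elim w)
    have "\<bar>funk S w u - funk S y u\<bar> \<le> dl" if "u \<in> S" for u
    proof -
      have "funk S w u \<le> dl + funk S y u"
        using funk_le_if_dominated[OF S that elim(3) y] elim(2) closure_subset by blast
      moreover have "funk S y u \<le> dl + funk S w u"
        using funk_le_if_dominated[OF S that y elim(3)] elim(1) closure_subset by blast
      ultimately show ?thesis
        by (simp add: abs_le_iff)
    qed
    then show ?case
      using elim(3) by blast
  qed
qed

lemma almost_geodesic_iff:
  "almost_geodesic S d xs \<longleftrightarrow> (\<forall>n. xs n \<in> S) \<and>
    (\<exists>\<epsilon>>0. \<forall>l\<ge>1. (\<Sum>i<l. d (xs i) (xs (Suc i))) \<le> d (xs 0) (xs l) + \<epsilon>)"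
  by (simp add: almost_geodesic_def sum.atLeast1_atMost_eq)

lemma sum_half_powers_le: "(\<Sum>i<l. (1/2::real) ^ Suc i) \<le> 1"
proof -
  have "(\<Sum>i<l. (1/2::real) ^ Suc i) = 1 - (1/2) ^ l"
    by (induction l) auto
  then show ?thesis
    by simp
qed

lemma almost_geodesic_with_funk_limitE:
  assumes S: "open_cone S" and h: "in_K S b h \<or> in_B S b h"
  obtains z where "almost_geodesic S (funk S) z" "funk_converges S b z h"
  using h
proof
  assume "in_K S b h"
  then obtain p where p: "p \<in> S" "\<And>y. y \<in> S \<Longrightarrow> h y = funk_f S b p y"
    unfolding in_K_def by blast
  have "almost_geodesic S (funk S) (\<lambda>_. p)"
    unfolding almost_geodesic_def using p(1) funk_self[OF S p(1)] by (intro conjI exI[of _ 1]) auto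
  moreover have "funk_converges S b (\<lambda>_. p) h"
    unfolding funk_converges_def using p by (simp add: funk_f_def)
  ultimately show thesis
    by (rule that)
next
  assume "in_B S b h"
  then show thesis
    unfolding in_B_def using that by blast
qed

section \<open>The tangent cone at a boundary point\<close>

lemma tangent_cone_iff: "v \<in> tangent_cone T x \<longleftrightarrow> (\<exists>s>0. x + s *\<^sub>R v \<in> T)"
proof
  assume "v \<in> tangent_cone T x"
  then obtain c y where "c > 0" "y \<in> T" "v = c *\<^sub>R (y - x)"
    unfolding tangent_cone_def by blast
  then show "\<exists>s>0. x + s *\<^sub>R v \<in> T"
    by (intro exI[of _ "1 / c"]) auto
next
  assume "\<exists>s>0. x + s *\<^sub>R v \<in> T"
  then obtain s where "s > 0" "x + s *\<^sub>R v \<in> T"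
    by blast
  then show "v \<in> tangent_cone T x"
    unfolding tangent_cone_def by (intro CollectI exI[of _ "1 / s"] exI[of _ "x + s *\<^sub>R v"]) auto
qed

locale boundary_point =
  fixes T :: "'a::euclidean_space set" and x :: 'a
  assumes cone: "open_cone T" and frontier: "x \<in> frontier T" and not_zero: "x \<notin> zero_set T"
begin

abbreviation tau :: "'a set" where
  "tau \<equiv> tangent_cone T x"

lemma x_in_closure: "x \<in> closure T"
  using frontier by (simp add: frontier_def)

lemma x_notin: "x \<notin> T"
  using frontier cone by (simp add: frontier_def interior_open open_cone_def)

lemma uminus_x_notin_closure: "- x \<notin> closure T"
  using not_zero x_in_closure unfolding zero_set_def by (auto intro: image_eqI[of _ _ "- x"])

lemma segment_in_cone:
  assumes "x + s *\<^sub>R v \<in> T" "0 < s'" "s' \<le> s"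
  shows "x + s' *\<^sub>R v \<in> T"
proof -
  have "(s' / s) *\<^sub>R (x + s *\<^sub>R v) \<in> T"
    using assms by (intro open_cone_scaleR[OF cone]) auto
  moreover have "(1 - s' / s) *\<^sub>R x \<in> closure T"
    using assms by (intro closure_open_cone_scaleR[OF cone x_in_closure]) auto
  ultimately have "(s' / s) *\<^sub>R (x + s *\<^sub>R v) + (1 - s' / s) *\<^sub>R x \<in> T"
    by (rule open_cone_add_closure[OF cone])
  moreover have "(s' / s) *\<^sub>R (x + s *\<^sub>R v) + (1 - s' / s) *\<^sub>R x = x + s' *\<^sub>R v"
    using assms by (simp add: algebra_simps)
  ultimately show ?thesis
    by simp
qed

lemma eventually_in_cone:
  assumes "v \<in> tau"
  shows "eventually (\<lambda>s. x + s *\<^sub>R v \<in> T) (at_right 0)"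
proof -
  obtain s where "s > 0" "x + s *\<^sub>R v \<in> T"
    using assms by (auto simp: tangent_cone_iff)
  have "eventually (\<lambda>s'. s' \<in> {0<..<s}) (at_right 0)"
    using eventually_at_right_real[OF \<open>s > 0\<close>] .
  then show ?thesis
    by eventually_elim (use \<open>x + s *\<^sub>R v \<in> T\<close> in \<open>auto intro: segment_in_cone\<close>)
qed

lemma subset_tangent_cone: "T \<subseteq> tau"
proof
  fix y assume "y \<in> T"
  have "y + x \<in> T"
    by (rule open_cone_add_closure[OF cone \<open>y \<in> T\<close> x_in_closure])
  then show "y \<in> tau"
    unfolding tangent_cone_iff by (intro exI[of _ 1]) (simp add: add.commute)
qed

lemma open_cone_tangent_cone: "open_cone tau"
  unfolding open_cone_def
proof (intro conjI allI impI)
  show "tau \<noteq> {}"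
    using subset_tangent_cone cone by (auto simp: open_cone_def)
  have "tau = (\<Union>s\<in>{0<..}. (\<lambda>v. x + s *\<^sub>R v) -` T)"
    by (auto simp: tangent_cone_iff)
  then show "open tau"
    using cone by (auto intro!: open_vimage continuous_intros simp: open_cone_def)
  show "convex tau"
  proof (rule convexI)
    fix v w and a b :: real
    assume vw: "v \<in> tau" "w \<in> tau" and ab: "0 \<le> a" "0 \<le> b" "a + b = 1"
    obtain s1 s2 where s: "s1 > 0" "x + s1 *\<^sub>R v \<in> T" "s2 > 0" "x + s2 *\<^sub>R w \<in> T"
      using vw by (auto simp: tangent_cone_iff)
    define s where "s = min s1 s2"
    have "x + s *\<^sub>R v \<in> T" "x + s *\<^sub>R w \<in> T"
      using s by (auto intro: segment_in_cone simp: s_def)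
    then have "a *\<^sub>R (x + s *\<^sub>R v) + b *\<^sub>R (x + s *\<^sub>R w) \<in> T"
      using cone ab by (intro convexD) (auto simp: open_cone_def)
    moreover have "a *\<^sub>R (x + s *\<^sub>R v) + b *\<^sub>R (x + s *\<^sub>R w) = x + s *\<^sub>R (a *\<^sub>R v + b *\<^sub>R w)"
      using ab by (simp add: algebra_simps flip: scaleR_add_left)
    ultimately show "a *\<^sub>R v + b *\<^sub>R w \<in> tau"
      unfolding tangent_cone_iff using s by (intro exI[of _ s]) (auto simp: s_def)
  qed
  fix c :: real assume "c > 0"
  show "(*\<^sub>R) c ` tau \<subseteq> tau"
  proof
    fix w assume "w \<in> (*\<^sub>R) c ` tau"
    then obtain v where "w = c *\<^sub>R v" "v \<in> tau"
      by blast
    moreover obtain s where "s > 0" "x + s *\<^sub>R v \<in> T"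
      using \<open>v \<in> tau\<close> by (auto simp: tangent_cone_iff)
    ultimately show "w \<in> tau"
      unfolding tangent_cone_iff using \<open>c > 0\<close> by (intro exI[of _ "s / c"]) auto
  qed
next
  show "0 \<notin> tau"
    using x_notin by (simp add: tangent_cone_iff)
qed

lemma closure_subset_closure_tangent_cone: "closure T \<subseteq> closure tau"
  by (rule closure_mono[OF subset_tangent_cone])

lemma uminus_x_in_closure_tangent_cone: "- x \<in> closure tau"
proof -
  obtain t where t: "t \<in> T"
    using cone by (auto simp: open_cone_def)
  have "eventually (\<lambda>c. c *\<^sub>R t - x \<in> closure tau) (at_right (0::real))"
    using eventually_at_right_less[of 0]
  proof eventually_elim
    case (elim c)
    then have "c *\<^sub>R t - x \<in> tau"
      unfolding tangent_cone_iff using open_cone_scaleR[OF cone t] by (intro exI[of _ 1]) simp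
    then show ?case
      using closure_subset by blast
  qed
  moreover have "((\<lambda>c. c *\<^sub>R t - x) \<longlongrightarrow> 0 *\<^sub>R t - x) (at_right 0)"
    by (intro tendsto_intros)
  ultimately show ?thesis
    using Lim_in_closed_set[of "closure tau" "\<lambda>c. c *\<^sub>R t - x"] by auto
qed

lemma closure_tangent_cone_add_x:
  assumes "a \<in> closure tau"
  shows "a + \<alpha> *\<^sub>R x \<in> closure tau"
proof (cases "\<alpha> \<ge> 0")
  case True
  then have "\<alpha> *\<^sub>R x \<in> closure tau"
    using x_in_closure closure_subset_closure_tangent_cone
    by (intro closure_open_cone_scaleR[OF open_cone_tangent_cone]) auto
  then show ?thesis
    by (rule closure_open_cone_add[OF open_cone_tangent_cone assms])
next
  case False
  then have "(- \<alpha>) *\<^sub>R (- x) \<in> closure tau"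
    using uminus_x_in_closure_tangent_cone
    by (intro closure_open_cone_scaleR[OF open_cone_tangent_cone]) auto
  then show ?thesis
    using closure_open_cone_add[OF open_cone_tangent_cone assms] by simp
qed

lemma funkM_tangent_cone_translate_scale:
  assumes s: "s > 0" and z: "z \<in> tau"
  shows "funkM tau (x + s *\<^sub>R w) z = s * funkM tau w z"
proof (rule antisym)
  show "funkM tau (x + s *\<^sub>R w) z \<le> s * funkM tau w z"
  proof (rule funkM_le_scaled[OF open_cone_tangent_cone z open_cone_tangent_cone z s])
    fix c assume c: "c \<in> dominating_scalars tau w z"
    then have "s *\<^sub>R (c *\<^sub>R z - w) + (- 1) *\<^sub>R x \<in> closure tau"
      using s by (intro closure_tangent_cone_add_x closure_open_cone_scaleR[OF open_cone_tangent_cone])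
        (auto simp: dominating_scalars_def)
    then show "s * c \<in> dominating_scalars tau (x + s *\<^sub>R w) z"
      using s c by (simp add: dominating_scalars_def algebra_simps)
  qed
  have "funkM tau w z \<le> (1 / s) * funkM tau (x + s *\<^sub>R w) z"
  proof (rule funkM_le_scaled[OF open_cone_tangent_cone z open_cone_tangent_cone z])
    fix c assume c: "c \<in> dominating_scalars tau (x + s *\<^sub>R w) z"
    then have "(1 / s) *\<^sub>R ((c *\<^sub>R z - (x + s *\<^sub>R w)) + 1 *\<^sub>R x) \<in> closure tau"
      using s by (intro closure_open_cone_scaleR[OF open_cone_tangent_cone] closure_tangent_cone_add_x)
        (auto simp: dominating_scalars_def)
    then show "1 / s * c \<in> dominating_scalars tau w z"
      using s c by (simp add: dominating_scalars_def algebra_simps)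
  qed (use s in simp)
  then show "s * funkM tau w z \<le> funkM tau (x + s *\<^sub>R w) z"
    using s by (simp add: field_simps)
qed

lemma funkM_tangent_cone_le:
  assumes s: "s > 0" and u: "x + s *\<^sub>R z \<in> T" and z: "z \<in> tau"
  shows "funkM tau y z \<le> s * funkM T y (x + s *\<^sub>R z)"
proof (rule funkM_le_scaled[OF cone u open_cone_tangent_cone z s])
  fix c assume c: "c \<in> dominating_scalars T y (x + s *\<^sub>R z)"
  then have "(c *\<^sub>R (x + s *\<^sub>R z) - y) + (- c) *\<^sub>R x \<in> closure tau"
    using closure_subset_closure_tangent_cone
    by (intro closure_tangent_cone_add_x) (auto simp: dominating_scalars_def)
  then show "s * c \<in> dominating_scalars tau y z"
    using s c by (simp add: dominating_scalars_def algebra_simps)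
qed

lemma eventually_funkM_le:
  assumes y: "y \<in> T" and z: "z \<in> tau" and d: "d > 0"
  shows "eventually (\<lambda>s. funkM T y (x + s *\<^sub>R z) \<le> exp d * funkM tau y z / s) (at_right 0)"
proof -
  define m where "m = funkM tau y z"
  define c where "c = exp d * m"
  have "m > 0"
    unfolding m_def using y subset_tangent_cone
    by (intro funkM_pos_in[OF open_cone_tangent_cone z]) auto
  then have c: "c > m" "c > 0"
    using d by (auto simp: c_def)
  \<comment> \<open>as c exceeds the infimum m, c z - y lies in the open cone tau, not only in its closure\<close>
  have "(m + c) / 2 \<in> dominating_scalars tau y z"
    using c by (intro dominating_scalars_if_funkM_less[OF open_cone_tangent_cone z]) (auto simp: m_def)
  then have "(c - (m + c) / 2) *\<^sub>R z + (((m + c) / 2) *\<^sub>R z - y) \<in> tau"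
    using c z by (intro open_cone_add_closure open_cone_scaleR open_cone_tangent_cone)
      (auto simp: dominating_scalars_def)
  then have "c *\<^sub>R z - y \<in> tau"
    by (simp add: algebra_simps)
  then obtain \<sigma> where \<sigma>: "\<sigma> > 0" "x + \<sigma> *\<^sub>R (c *\<^sub>R z - y) \<in> T"
    by (auto simp: tangent_cone_iff)
  have "eventually (\<lambda>s. s \<in> {0<..<\<sigma> * c}) (at_right 0)"
    using \<sigma> c by (intro eventually_at_right_real) simp
  then show ?thesis
  proof eventually_elim
    case (elim s)
    have "1 / \<sigma> \<le> c / s"
      using elim \<sigma> by (simp add: field_simps)
    then have "(c / s - 1 / \<sigma>) *\<^sub>R x \<in> closure T"
      by (intro closure_open_cone_scaleR[OF cone x_in_closure]) simp
    moreover have "(1 / \<sigma>) *\<^sub>R (x + \<sigma> *\<^sub>R (c *\<^sub>R z - y)) \<in> T"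
      using \<sigma> by (intro open_cone_scaleR[OF cone]) auto
    ultimately have "(1 / \<sigma>) *\<^sub>R (x + \<sigma> *\<^sub>R (c *\<^sub>R z - y)) + (c / s - 1 / \<sigma>) *\<^sub>R x \<in> T"
      using open_cone_add_closure[OF cone] by blast
    moreover have "(1 / \<sigma>) *\<^sub>R (x + \<sigma> *\<^sub>R (c *\<^sub>R z - y)) + (c / s - 1 / \<sigma>) *\<^sub>R x
        = (c / s) *\<^sub>R (x + s *\<^sub>R z) - y"
      using \<sigma> elim by (simp add: algebra_simps)
    ultimately have "c / s \<in> dominating_scalars T y (x + s *\<^sub>R z)"
      using elim c closure_subset by (auto simp: dominating_scalars_def)
    then show ?case
      by (auto dest: funkM_le simp: c_def m_def)
  qed
qed

lemma eventually_funkM_x_le: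
  assumes z: "z \<in> tau" and e: "e > 0"
  shows "eventually (\<lambda>s. funkM T x (x + s *\<^sub>R z) \<le> 1 + e) (at_right 0)"
proof -
  obtain \<sigma> where \<sigma>: "\<sigma> > 0" "x + \<sigma> *\<^sub>R z \<in> T"
    using z by (auto simp: tangent_cone_iff)
  have bound: "funkM T x (x + s *\<^sub>R z) \<le> \<sigma> / (\<sigma> - s)" if s: "0 < s" "s < \<sigma>" for s
  proof (rule funkM_le)
    have "(s / (\<sigma> - s)) *\<^sub>R (x + \<sigma> *\<^sub>R z) \<in> T"
      using s \<sigma> by (intro open_cone_scaleR[OF cone]) auto
    moreover have "\<sigma> / (\<sigma> - s) - 1 = s / (\<sigma> - s)" "\<sigma> / (\<sigma> - s) * s = s / (\<sigma> - s) * \<sigma>"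
      using s by (simp_all add: field_simps)
    then have "(s / (\<sigma> - s)) *\<^sub>R (x + \<sigma> *\<^sub>R z) = (\<sigma> / (\<sigma> - s)) *\<^sub>R (x + s *\<^sub>R z) - x"
      by (simp add: algebra_simps flip: scaleR_diff_left)
    ultimately show "\<sigma> / (\<sigma> - s) \<in> dominating_scalars T x (x + s *\<^sub>R z)"
      using s closure_subset by (auto simp: dominating_scalars_def)
  qed
  have "((\<lambda>s. \<sigma> / (\<sigma> - s)) \<longlongrightarrow> \<sigma> / (\<sigma> - 0)) (at_right 0)"
    using \<sigma> by (intro tendsto_intros) auto
  then have "eventually (\<lambda>s. \<sigma> / (\<sigma> - s) < 1 + e) (at_right 0)"
    using \<sigma> e by (intro order_tendstoD(2)) auto
  moreover have "eventually (\<lambda>s. s \<in> {0<..<\<sigma>}) (at_right 0)"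
    using \<sigma> by (intro eventually_at_right_real)
  ultimately show ?thesis
    by eventually_elim (use bound in force)
qed

lemma eventually_good_scale:
  assumes z: "z \<in> tau" and F: "finite F" "F \<subseteq> T" and e: "e > 0"
  shows "eventually (\<lambda>s. 0 < s \<and> x + s *\<^sub>R z \<in> T \<and> funkM T x (x + s *\<^sub>R z) \<le> 1 + e \<and>
      s * norm z \<le> e \<and> (\<forall>y\<in>F. funkM T y (x + s *\<^sub>R z) \<le> exp e * funkM tau y z / s \<and>
        funkM T (x + s *\<^sub>R z) y \<le> funkM T x y + e)) (at_right 0)"
proof -
  have "((\<lambda>s. s * norm z) \<longlongrightarrow> 0 * norm z) (at_right 0)"
    by (intro tendsto_intros)
  then have norm: "eventually (\<lambda>s. s * norm z < e) (at_right 0)"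
    using e by (intro order_tendstoD(2)) auto
  have continuity: "eventually (\<lambda>s. funkM T (x + s *\<^sub>R z) y < funkM T x y + e) (at_right 0)"
    if "y \<in> T" for y
  proof -
    have "((\<lambda>s. x + s *\<^sub>R z) \<longlongrightarrow> x + 0 *\<^sub>R z) (at_right 0)"
      by (intro tendsto_intros)
    then have "((\<lambda>s. funkM T (x + s *\<^sub>R z) y) \<longlongrightarrow> funkM T x y) (at_right 0)"
      using isCont_tendsto_compose[OF isCont_funkM[OF cone that]] by simp
    then show ?thesis
      using e by (intro order_tendstoD(2)) auto
  qed
  have "eventually (\<lambda>s. \<forall>y\<in>F. funkM T y (x + s *\<^sub>R z) \<le> exp e * funkM tau y z / s \<and>
      funkM T (x + s *\<^sub>R z) y \<le> funkM T x y + e) (at_right 0)"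
    using F(2) continuity eventually_funkM_le[OF _ z e]
    by (intro eventually_ball_finite[OF F(1)]) (force elim: eventually_elim2)
  then show ?thesis
    using eventually_at_right_less[of 0] eventually_in_cone[OF z] eventually_funkM_x_le[OF z e] norm
    by eventually_elim auto
qed

end

section \<open>Lifting sequences from the tangent cone\<close>

locale lifted_sequence = boundary_point +
  fixes z :: "nat \<Rightarrow> 'a" and s :: "nat \<Rightarrow> real" and F :: "nat \<Rightarrow> 'a set"
  assumes z_in: "z n \<in> tau"
    and s_pos: "s n > 0"
    and F_subset: "F n \<subseteq> T"
    and lift_in: "x + s n *\<^sub>R z n \<in> T"
    and funkM_x_lift_le: "funkM T x (x + s n *\<^sub>R z n) \<le> 1 + (1/2) ^ n"
    and norm_le: "s (Suc n) * norm (z (Suc n)) \<le> (1/2) ^ Suc n"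
    and funkM_lift_le: "y \<in> insert (x + s n *\<^sub>R z n) (F (Suc n)) \<Longrightarrow>
      funkM T y (x + s (Suc n) *\<^sub>R z (Suc n)) \<le> exp ((1/2) ^ Suc n) * funkM tau y (z (Suc n)) / s (Suc n)"
    and funkM_lift_back_le: "funkM T (x + s (Suc n) *\<^sub>R z (Suc n)) (x + s n *\<^sub>R z n)
      \<le> funkM T x (x + s n *\<^sub>R z n) + (1/2) ^ Suc n"
begin

abbreviation lift :: "nat \<Rightarrow> 'a" where
  "lift n \<equiv> x + s n *\<^sub>R z n"

lemma funk_tangent_cone_lift:
  assumes "w \<in> tau"
  shows "funk tau (lift m) w = ln (s m) + funk tau (z m) w"
  using funkM_tangent_cone_translate_scale[OF s_pos[of m] assms, of "z m"]
    funkM_pos_in[OF open_cone_tangent_cone assms z_in[of m]] s_pos[of m]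
  by (simp add: funk_def ln_mult)

lemma funk_lift_lower:
  assumes "y \<in> T"
  shows "funk tau y (z n) - ln (s n) \<le> funk T y (lift n)"
proof -
  have "funkM tau y (z n) > 0"
    using assms subset_tangent_cone by (intro funkM_pos_in[OF open_cone_tangent_cone z_in]) auto
  moreover have "funkM tau y (z n) \<le> s n * funkM T y (lift n)"
    by (rule funkM_tangent_cone_le[OF s_pos lift_in z_in])
  ultimately have "ln (funkM tau y (z n)) \<le> ln (s n * funkM T y (lift n))"
    by simp
  then show ?thesis
    using s_pos[of n] funkM_pos_in[OF cone lift_in[of n] assms] by (simp add: funk_def ln_mult)
qed

lemma funk_lift_upper:
  assumes "y \<in> insert (lift n) (F (Suc n))"
  shows "funk T y (lift (Suc n)) \<le> funk tau y (z (Suc n)) - ln (s (Suc n)) + (1/2) ^ Suc n"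
proof -
  have y: "y \<in> T"
    using assms lift_in F_subset by auto
  have "ln (funkM T y (lift (Suc n))) \<le> ln (exp ((1/2) ^ Suc n) * funkM tau y (z (Suc n)) / s (Suc n))"
    using funkM_lift_le[OF assms] funkM_pos_in[OF cone lift_in[of "Suc n"] y] by (rule ln_mono)
  also have "\<dots> = (1/2) ^ Suc n + ln (funkM tau y (z (Suc n))) - ln (s (Suc n))"
    using y subset_tangent_cone s_pos[of "Suc n"] funkM_pos_in[OF open_cone_tangent_cone z_in[of "Suc n"], of y]
    by (auto simp: ln_mult ln_div)
  finally show ?thesis
    by (simp add: funk_def)
qed

lemma funk_lift_step:
  "funk T (lift n) (lift (Suc n)) \<le> funk tau (z n) (z (Suc n)) + (ln (s n) - ln (s (Suc n))) + (1/2) ^ Suc n"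
  using funk_lift_upper[of "lift n" n] funk_tangent_cone_lift[OF z_in[of "Suc n"], of n] by simp

lemma almost_geodesic_funk_lift:
  assumes "almost_geodesic tau (funk tau) z"
  shows "almost_geodesic T (funk T) lift"
proof -
  obtain \<epsilon> where \<epsilon>: "\<epsilon> > 0"
    and geo: "\<And>l. l \<ge> 1 \<Longrightarrow> (\<Sum>i<l. funk tau (z i) (z (Suc i))) \<le> funk tau (z 0) (z l) + \<epsilon>"
    using assms unfolding almost_geodesic_iff by blast
  have "(\<Sum>i<l. funk T (lift i) (lift (Suc i))) \<le> funk T (lift 0) (lift l) + (\<epsilon> + 1)" if "l \<ge> 1" for l
  proof -
    have "(\<Sum>i<l. funk T (lift i) (lift (Suc i)))
        \<le> (\<Sum>i<l. funk tau (z i) (z (Suc i)) + (ln (s i) - ln (s (Suc i))) + (1/2) ^ Suc i)"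
      by (intro sum_mono funk_lift_step)
    also have "\<dots> = (\<Sum>i<l. funk tau (z i) (z (Suc i))) + (ln (s 0) - ln (s l)) + (\<Sum>i<l. (1/2) ^ Suc i)"
      by (simp add: sum.distrib sum_lessThan_telescope'[of "\<lambda>i. ln (s i)"])
    also have "\<dots> \<le> funk tau (z 0) (z l) + \<epsilon> + (ln (s 0) - ln (s l)) + 1"
      using geo[OF that] sum_half_powers_le[of l] by linarith
    also have "\<dots> \<le> funk T (lift 0) (lift l) + (\<epsilon> + 1)"
      using funk_lift_lower[OF lift_in[of 0], of l] funk_tangent_cone_lift[OF z_in[of l], of 0] by simp
    finally show ?thesis .
  qed
  then show ?thesis
    unfolding almost_geodesic_iff using \<epsilon> lift_in
    by (intro conjI allI exI[of _ "\<epsilon> + 1"]) auto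
qed

lemma lift_tendsto: "lift \<longlonglongrightarrow> x"
proof -
  have "(\<lambda>n. lift n - x) \<longlonglongrightarrow> 0"
  proof (rule Lim_null_comparison)
    show "eventually (\<lambda>n. norm (lift n - x) \<le> (1/2) ^ n) sequentially"
      by (subst eventually_sequentially_Suc[symmetric]) (use norm_le s_pos in \<open>simp add: less_imp_le\<close>)
    show "(\<lambda>n. (1/2::real) ^ n) \<longlonglongrightarrow> 0"
      by (rule LIMSEQ_realpow_zero) auto
  qed
  then show ?thesis
    by (rule LIM_zero_cancel)
qed

lemma funkM_lift_tendsto: "w \<in> T \<Longrightarrow> (\<lambda>n. funkM T (lift n) w) \<longlonglongrightarrow> funkM T x w"
  using isCont_tendsto_compose[OF isCont_funkM[OF cone] lift_tendsto] by blast

lemma almost_geodesic_rfunk_lift: "almost_geodesic T (rfunk T) lift"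
proof -
  have "(\<lambda>l. ln (funkM T (lift l) (lift 0))) \<longlonglongrightarrow> ln (funkM T x (lift 0))"
    using funkM_lift_tendsto[OF lift_in] funkM_pos[OF cone lift_in[of 0] uminus_x_notin_closure]
    by (intro tendsto_intros) auto
  then have "convergent (\<lambda>l. rfunk T (lift 0) (lift l))"
    unfolding rfunk_def funk_def by (rule convergentI)
  from convergent_imp_Bseq[OF this] obtain K
    where K: "K > 0" "\<And>l. norm (rfunk T (lift 0) (lift l)) \<le> K"
    by (rule BseqE) blast
  have step: "rfunk T (lift i) (lift (Suc i)) \<le> 3 * (1/2) ^ Suc i" for i
  proof -
    have "ln (funkM T (lift (Suc i)) (lift i)) \<le> funkM T (lift (Suc i)) (lift i) - 1"
      using funkM_pos_in[OF cone lift_in lift_in] by (rule ln_le_minus_one)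
    also have "\<dots> \<le> (1/2) ^ i + (1/2) ^ Suc i"
      using funkM_lift_back_le[of i] funkM_x_lift_le[of i] by simp
    finally show ?thesis
      by (simp add: rfunk_def funk_def)
  qed
  have bound: "(\<Sum>i<l. rfunk T (lift i) (lift (Suc i))) \<le> rfunk T (lift 0) (lift l) + (3 + K)" for l
  proof -
    have "(\<Sum>i<l. rfunk T (lift i) (lift (Suc i))) \<le> 3 * (\<Sum>i<l. (1/2) ^ Suc i)"
      unfolding sum_distrib_left by (intro sum_mono step)
    also have "\<dots> \<le> 3"
      using sum_half_powers_le[of l] by simp
    moreover have "- K \<le> rfunk T (lift 0) (lift l)"
      using K(2)[of l] by (simp add: abs_le_iff)
    ultimately show ?thesis
      by linarith
  qed
  show ?thesis
    unfolding almost_geodesic_iff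
  proof (intro conjI allI exI[of _ "3 + K"] impI)
    show "3 + K > 0"
      using K(1) by simp
  qed (use lift_in bound in auto)
qed

lemma rfunk_converges_lift:
  assumes "b \<in> T"
  shows "rfunk_converges T b lift (rfunk_r T b x)"
  unfolding rfunk_converges_def
proof (intro conjI allI ballI)
  fix y assume "y \<in> T"
  have "(\<lambda>n. ln (funkM T (lift n) y) - ln (funkM T (lift n) b)) \<longlonglongrightarrow> ln (funkM T x y) - ln (funkM T x b)"
    using funkM_lift_tendsto[OF \<open>y \<in> T\<close>] funkM_lift_tendsto[OF assms]
      funkM_pos[OF cone \<open>y \<in> T\<close> uminus_x_notin_closure] funkM_pos[OF cone assms uminus_x_notin_closure]
    by (intro tendsto_intros) auto
  then show "(\<lambda>n. rfunk T y (lift n) - rfunk T b (lift n)) \<longlonglongrightarrow> rfunk_r T b x y"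
    by (simp add: rfunk_def rfunk_r_def funk_def)
qed (rule lift_in)

lemma funk_lift_error_tendsto:
  assumes "eventually (\<lambda>n. w \<in> F n) sequentially"
  shows "(\<lambda>n. funk T w (lift n) - funk tau w (z n) + ln (s n)) \<longlonglongrightarrow> 0"
proof (rule Lim_null_comparison)
  have "eventually (\<lambda>n. w \<in> F (Suc n)) sequentially"
    using assms eventually_sequentially_Suc[of "\<lambda>n. w \<in> F n"] by simp
  then have "eventually (\<lambda>n. norm (funk T w (lift (Suc n)) - funk tau w (z (Suc n)) + ln (s (Suc n)))
      \<le> (1/2) ^ Suc n) sequentially"
  proof eventually_elim
    case (elim n)
    then have "w \<in> T"
      using F_subset by auto
    then show ?case
      using funk_lift_lower[of w "Suc n"] funk_lift_upper[of w n] elim by (simp add: abs_le_iff)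
  qed
  then show "eventually (\<lambda>n. norm (funk T w (lift n) - funk tau w (z n) + ln (s n)) \<le> (1/2) ^ n) sequentially"
    by (subst eventually_sequentially_Suc[symmetric])
  show "(\<lambda>n. (1/2::real) ^ n) \<longlonglongrightarrow> 0"
    by (rule LIMSEQ_realpow_zero) auto
qed

lemma funk_defect_tendsto_if_eventually_in_F:
  assumes "eventually (\<lambda>n. w \<in> F n) sequentially" "eventually (\<lambda>n. b \<in> F n) sequentially"
  shows "(\<lambda>n. (funk T w (lift n) - funk T b (lift n)) - (funk tau w (z n) - funk tau b (z n))) \<longlonglongrightarrow> 0"
  using tendsto_diff[OF funk_lift_error_tendsto[OF assms(1)] funk_lift_error_tendsto[OF assms(2)]]
  by (simp add: algebra_simps)

lemma funk_defect_tendsto: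
  assumes b: "\<And>n. b \<in> F n" and F_mono: "incseq F" and dense: "T \<subseteq> closure (\<Union>n. F n)"
    and y: "y \<in> T"
  shows "(\<lambda>n. (funk T y (lift n) - funk T b (lift n)) - (funk tau y (z n) - funk tau b (z n))) \<longlonglongrightarrow> 0"
proof (rule tendstoI)
  define D where "D w n = (funk T w (lift n) - funk T b (lift n)) - (funk tau w (z n) - funk tau b (z n))"
    for w n
  fix e :: real assume e: "e > 0"
  have "y \<in> tau"
    using y subset_tangent_cone by auto
  have "eventually (\<lambda>w. (w \<in> T \<and> (\<forall>u\<in>T. \<bar>funk T w u - funk T y u\<bar> \<le> e / 4)) \<and>
      (w \<in> tau \<and> (\<forall>u\<in>tau. \<bar>funk tau w u - funk tau y u\<bar> \<le> e / 4))) (nhds y)"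
    using e by (intro eventually_conj eventually_funk_near[OF cone y]
        eventually_funk_near[OF open_cone_tangent_cone \<open>y \<in> tau\<close>]) auto
  then obtain r where r: "r > 0" "\<And>w. dist w y < r \<Longrightarrow> (\<forall>u\<in>T. \<bar>funk T w u - funk T y u\<bar> \<le> e / 4) \<and>
      (\<forall>u\<in>tau. \<bar>funk tau w u - funk tau y u\<bar> \<le> e / 4)"
    unfolding eventually_nhds_metric by blast
  have "y \<in> closure (\<Union>n. F n)"
    using dense y by blast
  then obtain w k where w: "w \<in> F k" "dist w y < r"
    using r(1) unfolding closure_approachable by blast
  have near: "\<bar>D y n - D w n\<bar> \<le> e / 2" for n
  proof -
    have "\<bar>funk T w (lift n) - funk T y (lift n)\<bar> \<le> e / 4"
      "\<bar>funk tau w (z n) - funk tau y (z n)\<bar> \<le> e / 4"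
      using r(2)[OF w(2)] lift_in[of n] z_in[of n] by auto
    then show ?thesis
      unfolding D_def abs_le_iff by linarith
  qed
  have "eventually (\<lambda>n. w \<in> F n) sequentially"
    using w(1) F_mono by (auto simp: eventually_sequentially incseq_def)
  then have "eventually (\<lambda>n. dist (D w n) 0 < e / 2) sequentially"
    using e b unfolding D_def by (intro tendstoD funk_defect_tendsto_if_eventually_in_F) auto
  then show "eventually (\<lambda>n. dist (D y n) 0 < e) sequentially"
  proof eventually_elim
    case (elim n)
    then show ?case
      using near[of n] abs_triangle_ineq[of "D y n - D w n" "D w n"] by (simp add: dist_real_def)
  qed
qed

lemma funk_converges_lift:
  assumes h: "funk_converges tau b z h" and b: "\<And>n. b \<in> F n"
    and F_mono: "incseq F" and dense: "T \<subseteq> closure (\<Union>n. F n)"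
  shows "funk_converges T b lift h"
  unfolding funk_converges_def
proof (intro conjI allI ballI)
  fix y assume "y \<in> T"
  have "(\<lambda>n. (funk tau y (z n) - funk tau b (z n)) +
      ((funk T y (lift n) - funk T b (lift n)) - (funk tau y (z n) - funk tau b (z n)))) \<longlonglongrightarrow> h y + 0"
    using h \<open>y \<in> T\<close> subset_tangent_cone funk_defect_tendsto[OF b F_mono dense \<open>y \<in> T\<close>]
    by (intro tendsto_add) (auto simp: funk_converges_def)
  then show "(\<lambda>n. funk T y (lift n) - funk T b (lift n)) \<longlonglongrightarrow> h y"
    by simp
qed (rule lift_in)

end

lemma (in boundary_point) lifted_sequence_exists:
  assumes z: "\<And>n. z n \<in> tau" and F: "\<And>n. finite (F n)" "\<And>n. F n \<subseteq> T"
  obtains s where "lifted_sequence T x z s F"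
proof -
  define P where "P n \<sigma> \<longleftrightarrow> 0 < \<sigma> \<and> x + \<sigma> *\<^sub>R z n \<in> T \<and> funkM T x (x + \<sigma> *\<^sub>R z n) \<le> 1 + (1/2) ^ n"
    for n \<sigma>
  define Q where "Q n \<sigma> \<sigma>' \<longleftrightarrow> \<sigma>' * norm (z (Suc n)) \<le> (1/2) ^ Suc n \<and>
      (\<forall>y\<in>insert (x + \<sigma> *\<^sub>R z n) (F (Suc n)).
        funkM T y (x + \<sigma>' *\<^sub>R z (Suc n)) \<le> exp ((1/2) ^ Suc n) * funkM tau y (z (Suc n)) / \<sigma>' \<and>
        funkM T (x + \<sigma>' *\<^sub>R z (Suc n)) y \<le> funkM T x y + (1/2) ^ Suc n)"
    for n \<sigma> \<sigma>'
  have "\<exists>s. \<forall>n. P n (s n) \<and> Q n (s n) (s (Suc n))"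
  proof (rule dependent_nat_choice)
    have "eventually (P 0) (at_right 0)"
      using eventually_good_scale[OF z[of 0] finite.emptyI empty_subsetI zero_less_one]
      by (rule eventually_mono) (simp add: P_def)
    then show "\<exists>\<sigma>. P 0 \<sigma>"
      using eventually_happens'[OF trivial_limit_at_right_real] by blast
  next
    fix \<sigma> n assume "P n \<sigma>"
    then have "finite (insert (x + \<sigma> *\<^sub>R z n) (F (Suc n)))" "insert (x + \<sigma> *\<^sub>R z n) (F (Suc n)) \<subseteq> T"
      using F by (auto simp: P_def)
    from eventually_good_scale[OF z[of "Suc n"] this, of "(1/2) ^ Suc n"]
    have "eventually (\<lambda>\<sigma>'. P (Suc n) \<sigma>' \<and> Q n \<sigma> \<sigma>') (at_right 0)"
      by (rule eventually_mono) (auto simp: P_def Q_def)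
    then show "\<exists>\<sigma>'. P (Suc n) \<sigma>' \<and> Q n \<sigma> \<sigma>'"
      using eventually_happens'[OF trivial_limit_at_right_real] by blast
  qed
  then obtain s where s: "\<And>n. P n (s n)" "\<And>n. Q n (s n) (s (Suc n))"
    by blast
  have "0 < s n" "x + s n *\<^sub>R z n \<in> T" "funkM T x (x + s n *\<^sub>R z n) \<le> 1 + (1/2) ^ n" for n
    using s(1)[of n] unfolding P_def by blast+
  moreover have "s (Suc n) * norm (z (Suc n)) \<le> (1/2) ^ Suc n"
    "funkM T (x + s (Suc n) *\<^sub>R z (Suc n)) (x + s n *\<^sub>R z n) \<le> funkM T x (x + s n *\<^sub>R z n) + (1/2) ^ Suc n"
    "y \<in> insert (x + s n *\<^sub>R z n) (F (Suc n)) \<Longrightarrow>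
      funkM T y (x + s (Suc n) *\<^sub>R z (Suc n)) \<le> exp ((1/2) ^ Suc n) * funkM tau y (z (Suc n)) / s (Suc n)"
    for n y
    using s(2)[of n] unfolding Q_def by blast+
  ultimately show ?thesis
    using z F(2)
    by (intro that[of s] lifted_sequence.intro boundary_point_axioms lifted_sequence_axioms.intro) blast+

qed

theorem mainTheorem16:
  fixes T :: "'a::euclidean_space set" and b x :: 'a and h :: "'a \<Rightarrow> real"
  assumes "open_cone T" and "b \<in> T"
    and "x \<in> frontier T - zero_set T"
    and "in_K (tangent_cone T x) b h \<or> in_B (tangent_cone T x) b h"
  shows "\<exists>xs. (\<forall>n. xs n \<in> T) \<and>
           almost_geodesic T (funk T) xs \<and> almost_geodesic T (rfunk T) xs \<and>
           funk_converges T b xs h \<and> rfunk_converges T b xs (rfunk_r T b x)"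
proof -
  interpret boundary_point T x
    using assms(1,3) by unfold_locales auto
  obtain z where z: "almost_geodesic tau (funk tau) z" "funk_converges tau b z h"
    using almost_geodesic_with_funk_limitE[OF open_cone_tangent_cone assms(4)] .
  have "open T" "T \<noteq> {}"
    using cone assms(2) by (auto simp: open_cone_def)
  then obtain d :: "nat \<Rightarrow> 'a" where d: "range d \<subseteq> T" "T \<subseteq> closure (range d)"
    by (rule open_dense_range)
  define F where "F n = insert b (d ` {..n})" for n
  have "z n \<in> tau" "finite (F n)" "F n \<subseteq> T" for n
    using z(1) d(1) assms(2) by (auto simp: almost_geodesic_def F_def)
  then obtain s where "lifted_sequence T x z s F"
    by (rule lifted_sequence_exists)
  then interpret lifted_sequence T x z s F .
  have "funk_converges T b lift h"
  proof (rule funk_converges_lift[OF z(2)])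
    show "b \<in> F n" "incseq F" for n
      by (auto simp: F_def incseq_def)
    show "T \<subseteq> closure (\<Union>n. F n)"
      using d(2) closure_mono[of "range d" "\<Union>n. F n"] by (auto simp: F_def)
  qed
  then show ?thesis
    using lift_in almost_geodesic_funk_lift[OF z(1)] almost_geodesic_rfunk_lift
      rfunk_converges_lift[OF assms(2)]
    by (intro exI[of _ lift]) auto
qed

end
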